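(* Let $\mathrm r=(r_1,\dots,r_d)\in\mathbb{Z}_+^d$ with $\mathrm r>0$. Then the map $\Phi:\bar{\mathcal F}_d^{\mathrm r}\to \bar S_d^{\mathrm r}\times C_d^{\mathrm r}$, $(\mathbf f,c_{\mathbf f})\mapsto(\Psi((\mathbf f,c_{\mathbf f})),\mathrm c_{(\mathbf f,c_{\mathbf f})})$, is a bijection.
   Context: $d\ge2$, $[d]=\{1,\dots,d\}$. A plane forest is a finite or infinite sequence $\mathbf t_1,\mathbf t_2,\dots$ of finite rooted plane (ordered) trees; its vertices are listed in breadth-first search order (first the vertices of $\mathbf t_1$ generation by generation, each generation from left to right, then those of $\mathbf t_2$, etc.). A $d$-type forest $(\mathbf f,c_{\mathbf f})$ is a plane forest with a map $c_{\mathbf f}$ from its vertices to $[d]$ (the type) such that children of a common parent appear, from left to right, in nondecreasing order of type; $\mathcal F_d$ is the set of (unlabeled) $d$-type forests. $p_j(u)$ is the number of children of type $j$ of the vertex $u$. A subtree of type $i$ is a maximal connected subgraph all of whose vertices have type $i$; the subforest $\mathbf f^{(i)}$ of type $i$ is the plane forest formed by the subtrees of type $i$, ranked according to the order of their roots in $\mathbf f$; $u^{(i)}_1,u^{(i)}_2,\dots$ are its vertices in its own breadth-first order. The root type sequence is $\mathrm c_{(\mathbf f,c_{\mathbf f})}=(c_{\mathbf f}(r(\mathbf t_1)),c_{\mathbf f}(r(\mathbf t_2)),\dots)$ where $r(\mathbf t)$ is the root of $\mathbf t$. $S_d$: families $x=(x^{(1)},\dots,x^{(d)})$, $x^{(i)}=(x^{i,1},\dots,x^{i,d})$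 a $\mathbb{Z}^d$-valued sequence indexed by $\{0,\dots,n_i\}$ ($0\le n_i\le\infty$), $x^{(i)}_0=0$, $x^{i,j}$ nondecreasing for $i\ne j$, $x^{i,i}_{n+1}-x^{i,i}_n\ge -1$; $(n_1,\dots,n_d)$ is its length; $x^{i,j}(n):=x^{i,j}_n$. $\Psi:\mathcal F_d\to S_d$ maps $(\mathbf f,c_{\mathbf f})$ to $x$ where $n_i$ is the number of vertices of $\mathbf f^{(i)}$, $x^{(i)}_0=0$, and $x^{i,j}_{n+1}-x^{i,j}_n=p_j(u^{(i)}_{n+1})$ for $j\ne i$, $x^{i,i}_{n+1}-x^{i,i}_n=p_i(u^{(i)}_{n+1})-1$, $0\le n\le n_i-1$. Coordinatewise order $\le$ on $\overline{\mathbb{Z}}_+^d$; $\mathrm q<\mathrm q'$ means $\mathrm q\le\mathrm q'$ and $\mathrm q\ne\mathrm q'$. A solution of $(\mathrm r,x)$ (for $x$ of length $\mathrm q$) is $\mathrm s\in\mathbb{Z}_+^d$, $\mathrm s\le\mathrm q$, with $r_j+\sum_i x^{i,j}(s_i)=0$ for all $j$; the smallest solution is a solution $\le$ every other solution. $S_d^{\mathrm r}$ is the set of $x\in S_d$ whose length lies in $\mathbb{N}^d$ ($\mathbb N=\{1,2,\dots\}$) and is the smallest solution of $(\mathrm r,x)$; $\bar S_d^{\mathrm r}$ is the set of $x\in S_d^{\mathrm r}$ with $x^{i,i}_k=-k$ for all $k$ and $i$. For $r=r_1+\dots+r_d$, $C_d^{\mathrm r}=\{c\in[d]^r:\#\{j\in[r]:c_j=i\}=r_i,\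 i\in[d]\}$. $\mathcal F_d^{\mathrm r}$ is the set of $(\mathbf f,c_{\mathbf f})\in\mathcal F_d$ with $r_1+\dots+r_d$ trees, containing at least one vertex of each type, with root type sequence in $C_d^{\mathrm r}$; $\bar{\mathcal F}_d^{\mathrm r}$ is the set of those $(\mathbf f,c_{\mathbf f})\in\mathcal F_d^{\mathrm r}$ in which no vertex of type $i$ has a child of type $i$, for every $i$. *)

theory Defs
  imports Main
begin

text \<open>A finite rooted plane (ordered) tree whose vertices carry a label; children are
  listed from left to right. Equality of values is equality of unlabelled plane trees.\<close>
datatype 'a ptree = PNode 'a "'a ptree list"

fun label :: "'a ptree \<Rightarrow> 'a" where
  "label (PNode a ts) = a"

fun kids :: "'a ptree \<Rightarrow> 'a ptree list" where
  "kids (PNode a ts) = ts"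

fun nverts :: "'a ptree \<Rightarrow> nat" where
  "nverts (PNode a ts) = Suc (sum_list (map nverts ts))"

text \<open>Each vertex is recorded together with the label of its
  parent (None for a root).\<close>
primrec pgens :: "('a option \<times> 'a ptree) list \<Rightarrow> nat \<Rightarrow> ('a option \<times> 'a ptree) list" where
  "pgens xs 0 = xs"
| "pgens xs (Suc k) =
     concat (map (\<lambda>(p, v). map (\<lambda>w. (Some (label v), w)) (kids v)) (pgens xs k))"

text \<open>Breadth-first order of the vertices of a tree: generation by generation, each from left
  to right (the height is smaller than the number of vertices, so all generations are included).
  A vertex is represented by the subtree rooted at it, paired with its parent's label.\<close>
definition bfs_tree :: "'a ptree \<Rightarrow> ('a option \<times> 'a ptree) list" where
  "bfs_tree t = concat (map (pgens [(None, t)]) [0..<nverts t])"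

definition bfs_forest :: "'a ptree list \<Rightarrow> ('a option \<times> 'a ptree) list" where
  "bfs_forest ts = concat (map bfs_tree ts)"

fun wf_dtree :: "nat \<Rightarrow> nat ptree \<Rightarrow> bool" where
  "wf_dtree d (PNode c ts) =
     (c \<in> {1..d} \<and> sorted (map label ts) \<and> (\<forall>t\<in>set ts. wf_dtree d t))"

text \<open>Finite d-type forests (the forests considered in the statement have finitely many trees).\<close>
definition Fd :: "nat \<Rightarrow> nat ptree list set" where
  "Fd d = {ts. \<forall>t\<in>set ts. wf_dtree d t}"

definition vertices :: "nat ptree list \<Rightarrow> nat ptree list" where
  "vertices ts = map snd (bfs_forest ts)"

definition pcount :: "nat \<Rightarrow> nat ptree \<Rightarrow> nat" where
  "pcount j u = length (filter (\<lambda>w. label w = j) (kids u))"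

text \<open>The subtree of type i rooted at a vertex of type i: keep only type-i descendants
  connected through type-i vertices. Each vertex of the result is labelled by the
  corresponding vertex (subtree) of the original forest.\<close>
fun restr :: "nat \<Rightarrow> nat ptree \<Rightarrow> nat ptree ptree" where
  "restr i (PNode c ts) = PNode (PNode c ts) (map (restr i) (filter (\<lambda>t. label t = i) ts))"

text \<open>Roots of the subtrees of type i (maximal connected type-i subgraphs), in the
  breadth-first order of the forest: type-i vertices that are roots or have a parent
  of type different from i.\<close>
definition sub_roots :: "nat \<Rightarrow> nat ptree list \<Rightarrow> nat ptree list" where
  "sub_roots i ts = map snd (filter (\<lambda>(p, v). label v = i \<and> p \<noteq> Some i) (bfs_forest ts))"

definition subforest :: "nat \<Rightarrow> nat ptree list \<Rightarrow> nat ptree ptree list" where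
  "subforest i ts = map (restr i) (sub_roots i ts)"

text \<open>u^(i)_1, u^(i)_2, ...: vertices of f^(i) in its own breadth-first order (list index 0
  corresponds to u_1), given as the corresponding vertices of the original forest.\<close>
definition useq :: "nat \<Rightarrow> nat ptree list \<Rightarrow> nat ptree list" where
  "useq i ts = map (label \<circ> snd) (bfs_forest (subforest i ts))"

text \<open>An element of S_d with finite length (n_1,...,n_d) is represented by a pair (q, x):
  q i = n_i and x i j n = x^{i,j}_n for i, j in [d], 0 <= n <= n_i. For canonicity,
  q is 0 outside [d] and x is 0 outside its domain.\<close>
definition Sd_fin :: "nat \<Rightarrow> ((nat \<Rightarrow> nat) \<times> (nat \<Rightarrow> nat \<Rightarrow> nat \<Rightarrow> int)) set" where
  "Sd_fin d = {(q, x).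
     (\<forall>i. i \<notin> {1..d} \<longrightarrow> q i = 0) \<and>
     (\<forall>i j n. (i \<notin> {1..d} \<or> j \<notin> {1..d} \<or> n > q i) \<longrightarrow> x i j n = 0) \<and>
     (\<forall>i\<in>{1..d}. \<forall>j\<in>{1..d}. x i j 0 = 0) \<and>
     (\<forall>i\<in>{1..d}. \<forall>j\<in>{1..d}. i \<noteq> j \<longrightarrow> (\<forall>n < q i. x i j n \<le> x i j (Suc n))) \<and>
     (\<forall>i\<in>{1..d}. \<forall>n < q i. x i i (Suc n) - x i i n \<ge> -1)}"

definition is_solution ::
  "nat \<Rightarrow> (nat \<Rightarrow> nat) \<Rightarrow> (nat \<Rightarrow> nat) \<Rightarrow> (nat \<Rightarrow> nat \<Rightarrow> nat \<Rightarrow> int) \<Rightarrow> (nat \<Rightarrow> nat) \<Rightarrow> bool" where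
  "is_solution d r q x s \<longleftrightarrow>
     (\<forall>i\<in>{1..d}. s i \<le> q i) \<and>
     (\<forall>j\<in>{1..d}. int (r j) + (\<Sum>i=1..d. x i j (s i)) = 0)"

definition is_smallest_solution ::
  "nat \<Rightarrow> (nat \<Rightarrow> nat) \<Rightarrow> (nat \<Rightarrow> nat) \<Rightarrow> (nat \<Rightarrow> nat \<Rightarrow> nat \<Rightarrow> int) \<Rightarrow> (nat \<Rightarrow> nat) \<Rightarrow> bool" where
  "is_smallest_solution d r q x s \<longleftrightarrow>
     is_solution d r q x s \<and>
     (\<forall>s'. is_solution d r q x s' \<longrightarrow> (\<forall>i\<in>{1..d}. s i \<le> s' i))"

definition Sr :: "nat \<Rightarrow> (nat \<Rightarrow> nat) \<Rightarrow> ((nat \<Rightarrow> nat) \<times> (nat \<Rightarrow> nat \<Rightarrow> nat \<Rightarrow> int)) set" where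
  "Sr d r = {(q, x). (q, x) \<in> Sd_fin d \<and> (\<forall>i\<in>{1..d}. q i \<ge> 1) \<and> is_smallest_solution d r q x q}"

definition barSr :: "nat \<Rightarrow> (nat \<Rightarrow> nat) \<Rightarrow> ((nat \<Rightarrow> nat) \<times> (nat \<Rightarrow> nat \<Rightarrow> nat \<Rightarrow> int)) set" where
  "barSr d r = {(q, x). (q, x) \<in> Sr d r \<and> (\<forall>i\<in>{1..d}. \<forall>k \<le> q i. x i i k = - int k)}"

definition Cdr :: "nat \<Rightarrow> (nat \<Rightarrow> nat) \<Rightarrow> nat list set" where
  "Cdr d r = {c. length c = (\<Sum>i=1..d. r i) \<and> (\<forall>j\<in>set c. j \<in> {1..d}) \<and>
                 (\<forall>i\<in>{1..d}. length (filter (\<lambda>j. j = i) c) = r i)}"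

definition Psi :: "nat \<Rightarrow> nat ptree list \<Rightarrow> (nat \<Rightarrow> nat) \<times> (nat \<Rightarrow> nat \<Rightarrow> nat \<Rightarrow> int)" where
  "Psi d ts =
     ((\<lambda>i. if i \<in> {1..d} then length (useq i ts) else 0),
      (\<lambda>i j n. if i \<in> {1..d} \<and> j \<in> {1..d} \<and> n \<le> length (useq i ts)
               then (\<Sum>k<n. int (pcount j (useq i ts ! k)) - (if i = j then 1 else 0))
               else 0))"

definition root_types :: "nat ptree list \<Rightarrow> nat list" where
  "root_types ts = map label ts"

definition Fr :: "nat \<Rightarrow> (nat \<Rightarrow> nat) \<Rightarrow> nat ptree list set" where
  "Fr d r = {ts. ts \<in> Fd d \<and> length ts = (\<Sum>i=1..d. r i) \<and>
                 (\<forall>i\<in>{1..d}. \<exists>v\<in>set (vertices ts). label v = i) \<and>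
                 root_types ts \<in> Cdr d r}"

definition barFr :: "nat \<Rightarrow> (nat \<Rightarrow> nat) \<Rightarrow> nat ptree list set" where
  "barFr d r = {ts. ts \<in> Fr d r \<and>
                    (\<forall>v\<in>set (vertices ts). \<forall>w\<in>set (kids v). label w \<noteq> label v)}"

definition Phi :: "nat \<Rightarrow> nat ptree list \<Rightarrow> ((nat \<Rightarrow> nat) \<times> (nat \<Rightarrow> nat \<Rightarrow> nat \<Rightarrow> int)) \<times> nat list" where
  "Phi d ts = (Psi d ts, root_types ts)"

end

theory Submission
  imports Defs "HOL-Library.Multiset"
begin

text \<open>In a forest where no vertex has a child of its own type, every subtree of type \<open>i\<close> is a
  single vertex, so \<open>\<Psi>\<close> records for each type \<open>i\<close> the queue of child-type lists of the type-\<open>i\<close>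
  vertices in breadth-first order (the increments of \<open>x i j\<close> count type-\<open>j\<close> children). Together
  with the root types these queues determine the forest: a decoder rebuilds it generation by
  generation, each vertex of type \<open>i\<close> taking the next entry of queue \<open>i\<close>. This gives injectivity.

  Decoding succeeds as long as the queues are balanced, i.e. each queue holds exactly as many
  entries as vertices of its type remain to be produced; for prefixes of lengths \<open>s i\<close>, balance
  is precisely the equation \<open>r j + (\<Sum>i. x i j (s i)) = 0\<close>. The prefixes consumed by a decoding
  are balanced, and a decoding never consumes more than any balanced prefixes, so what it
  consumes is the smallest solution. For the queues of a forest everything is consumed, so
  \<open>\<Psi>\<close> lands in \<open>barSr d r\<close>; conversely, decoding the queues read off a point of \<open>barSr d r\<close>
  consumes its smallest solution, which is everything, so \<open>\<Phi>\<close> is onto.\<close>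

lemma length_filter_eq_count_list: "length (filter (\<lambda>x. f x = a) xs) = count_list (map f xs) a"
  by (induction xs) simp_all

lemma sum_count_list_nth_take:
  "n \<le> length xs \<Longrightarrow> (\<Sum>k<n. count_list (xs ! k) j) = count_list (concat (take n xs)) j"
proof (induction n)
  case (Suc n)
  then show ?case
    by (simp add: take_Suc_conv_app_nth)
qed simp

lemma sorted_eqI_count_list:
  assumes "sorted xs" "sorted ys" "\<And>a. count_list xs a = count_list ys a"
  shows "xs = ys"
proof -
  have "mset xs = mset ys"
    using assms(3) by (simp add: multiset_eq_iff count_mset)
  then show ?thesis
    using properties_for_sort[of xs ys] assms(1) sorted_sort_id[OF assms(2)] by simp
qed

lemma count_list_replicate: "count_list (replicate n a) b = (if a = b then n else 0)"
  by (induction n) auto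

lemma count_list_concat_replicates:
  "distinct as \<Longrightarrow>
     count_list (concat (map (\<lambda>a. replicate (f a) a) as)) b = (if b \<in> set as then f b else 0)"
  by (induction as) (auto simp: count_list_replicate)

definition labelled_entries :: "'b list \<Rightarrow> 'a list \<Rightarrow> 'b \<Rightarrow> 'a list" where
  "labelled_entries ls ss i = map snd (filter (\<lambda>p. fst p = i) (zip ls ss))"

lemma labelled_entries_Nil [simp]: "labelled_entries [] ss i = []"
  by (simp add: labelled_entries_def)

lemma labelled_entries_Cons [simp]:
  "labelled_entries (l # ls) (s # ss) i =
     (if l = i then s # labelled_entries ls ss i else labelled_entries ls ss i)"
  by (simp add: labelled_entries_def)

lemma length_labelled_entries:
  "length ss = length ls \<Longrightarrow> length (labelled_entries ls ss j) = count_list ls j"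
proof (induction ls arbitrary: ss)
  case (Cons l ls)
  then show ?case
    by (cases ss) auto
qed simp

lemma sum_count_labelled_entries:
  assumes "finite A" "set ls \<subseteq> A" "length ss = length ls"
  shows "(\<Sum>i\<in>A. count_list (concat (labelled_entries ls ss i)) j) = count_list (concat ss) j"
  using assms(2,3)
proof (induction ls arbitrary: ss)
  case (Cons l ls)
  then obtain s ss' where ss: "ss = s # ss'" "length ss' = length ls"
    by (cases ss) auto
  have "(\<Sum>i\<in>A. count_list (concat (labelled_entries (l # ls) ss i)) j) =
        (\<Sum>i\<in>A. (if i = l then count_list s j else 0) + count_list (concat (labelled_entries ls ss' i)) j)"
    using ss by (intro sum.cong) auto
  then show ?case
    using Cons assms(1) ss by (simp add: sum.distrib)
qed simp

definition children :: "'a ptree list \<Rightarrow> 'a ptree list" where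
  "children ts = concat (map kids ts)"

definition forest_size :: "'a ptree list \<Rightarrow> nat" where
  "forest_size ts = sum_list (map nverts ts)"

definition child_types :: "'a ptree \<Rightarrow> 'a list" where
  "child_types v = map label (kids v)"

lemma children_Nil [simp]: "children [] = []"
  and children_Cons [simp]: "children (t # ts) = kids t @ children ts"
  by (simp_all add: children_def)

lemma forest_size_Nil [simp]: "forest_size [] = 0"
  and forest_size_Cons [simp]: "forest_size (t # ts) = nverts t + forest_size ts"
  and forest_size_append [simp]: "forest_size (ts @ us) = forest_size ts + forest_size us"
  by (simp_all add: forest_size_def)

lemma nverts_eq_Suc_forest_size_kids: "nverts t = Suc (forest_size (kids t))"
  by (cases t) (simp add: forest_size_def)

lemma forest_size_children: "forest_size (children ts) + length ts = forest_size ts"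
  by (induction ts) (simp_all add: nverts_eq_Suc_forest_size_kids)

lemma forest_size_eq_0_iff [simp]: "forest_size ts = 0 \<longleftrightarrow> ts = []"
  by (cases ts) (simp_all add: nverts_eq_Suc_forest_size_kids)

lemma labels_children: "map label (children ts) = concat (map child_types ts)"
  by (induction ts) (simp_all add: child_types_def)

function level_order :: "'a ptree list \<Rightarrow> 'a ptree list" where
  "level_order ts = (if ts = [] then [] else ts @ level_order (children ts))"
  by auto
termination
proof (relation "measure forest_size")
  fix ts :: "'a ptree list"
  assume "ts \<noteq> []"
  then show "(children ts, ts) \<in> measure forest_size"
    using forest_size_children[of ts] by (cases ts) auto
qed simp

declare level_order.simps [simp del]

lemma level_order_Nil [simp]: "level_order [] = []"
  by (simp add: level_order.simps)

lemma level_order_unfold: "level_order ts = ts @ level_order (children ts)"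
  by (cases "ts = []") (simp_all add: level_order.simps[of ts])

lemma length_level_order: "length (level_order ts) = forest_size ts"
proof (induction ts rule: level_order.induct)
  case (1 ts)
  then show ?case
    using forest_size_children[of ts] level_order_unfold[of ts] by (cases "ts = []") auto
qed

lemma labels_level_order:
  "map label (level_order ts) = map label ts @ concat (map child_types (level_order ts))"
proof (induction ts rule: level_order.induct)
  case (1 ts)
  then show ?case
    using level_order_unfold[of ts] by (cases "ts = []") (auto simp: labels_children)
qed

lemma children_funpow_Nil [simp]: "(children ^^ k) [] = []"
  by (induction k) simp_all

lemma children_funpow_Suc: "(children ^^ Suc k) ts = (children ^^ k) (children ts)"
  by (simp only: funpow_Suc_right comp_apply)

lemma generation_subset_level_order: "set ((children ^^ k) ts) \<subseteq> set (level_order ts)"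
proof (induction k arbitrary: ts)
  case 0
  then show ?case using level_order_unfold[of ts] by auto
next
  case (Suc k)
  have "set ((children ^^ Suc k) ts) \<subseteq> set (level_order (children ts))"
    using Suc.IH[of "children ts"] by (simp only: children_funpow_Suc)
  also have "\<dots> \<subseteq> set (level_order ts)"
    using level_order_unfold[of ts] by auto
  finally show ?case .
qed

lemma concat_generations:
  "forest_size ts \<le> m \<Longrightarrow> concat (map (\<lambda>k. (children ^^ k) ts) [0..<m]) = level_order ts"
proof (induction m arbitrary: ts)
  case (Suc m)
  show ?case
  proof (cases "ts = []")
    case False
    then have "forest_size (children ts) \<le> m"
      using Suc.prems forest_size_children[of ts] by (cases ts) auto
    then have "concat (map (\<lambda>k. (children ^^ k) (children ts)) [0..<m]) = level_order (children ts)"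
      by (rule Suc.IH)
    moreover have "[0..<Suc m] = 0 # map Suc [0..<m]"
      by (simp add: map_Suc_upt upt_conv_Cons del: upt_Suc)
    ultimately show ?thesis
      by (simp add: children_funpow_Suc level_order_unfold[of ts] comp_def del: upt_Suc funpow.simps)
  qed (simp add: concat_eq_Nil_conv)
qed simp

lemma level_order_kids_closed:
  "w \<in> set (level_order ts) \<Longrightarrow> v \<in> set (kids w) \<Longrightarrow> v \<in> set (level_order ts)"
proof (induction ts rule: level_order.induct)
  case (1 ts)
  show ?case
  proof (cases "w \<in> set ts")
    case True
    then have "v \<in> set (children ts)"
      using "1.prems"(2) by (auto simp: children_def)
    then show ?thesis
      using level_order_unfold[of ts] level_order_unfold[of "children ts"] by auto
  next
    case False
    then have "ts \<noteq> []" "w \<in> set (level_order (children ts))"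
      using "1.prems"(1) level_order_unfold[of ts] by auto
    then show ?thesis
      using "1.IH" "1.prems"(2) level_order_unfold[of ts] by auto
  qed
qed

lemma wf_dtree_level_order:
  "\<forall>t\<in>set ts. wf_dtree d t \<Longrightarrow> v \<in> set (level_order ts) \<Longrightarrow> wf_dtree d v"
proof (induction ts rule: level_order.induct)
  case (1 ts)
  show ?case
  proof (cases "v \<in> set ts")
    case False
    then have "ts \<noteq> []" "v \<in> set (level_order (children ts))"
      using "1.prems"(2) level_order_unfold[of ts] by auto
    moreover have "\<forall>t\<in>set (children ts). wf_dtree d t"
      using "1.prems"(1) by (force simp: children_def elim: wf_dtree.elims)
    ultimately show ?thesis
      using "1.IH" by blast
  qed (use "1.prems" in blast)
qed

lemma wf_dtree_root: "wf_dtree d v \<Longrightarrow> label v \<in> {1..d} \<and> sorted (child_types v)"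
  by (cases v) (simp add: child_types_def)

lemma wf_dtree_child_types: "wf_dtree d v \<Longrightarrow> set (child_types v) \<subseteq> {1..d}"
  using wf_dtree_root by (cases v) (fastforce simp: child_types_def)

lemma wf_dtree_iff_level_order:
  "wf_dtree d t \<longleftrightarrow> (\<forall>v\<in>set (level_order [t]). label v \<in> {1..d} \<and> sorted (child_types v))"
proof
  assume "wf_dtree d t"
  then have "wf_dtree d v" if "v \<in> set (level_order [t])" for v
    using wf_dtree_level_order[of "[t]" d v] that by simp
  then show "\<forall>v\<in>set (level_order [t]). label v \<in> {1..d} \<and> sorted (child_types v)"
    using wf_dtree_root by blast
next
  assume vertices_ok: "\<forall>v\<in>set (level_order [t]). label v \<in> {1..d} \<and> sorted (child_types v)"
  have "v \<in> set (level_order [t]) \<Longrightarrow> wf_dtree d v" for v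
  proof (induction v)
    case (PNode c us)
    have "\<forall>u\<in>set us. wf_dtree d u"
      using PNode.IH level_order_kids_closed[OF PNode.prems] by simp
    moreover have "label (PNode c us) \<in> {1..d} \<and> sorted (child_types (PNode c us))"
      by (rule bspec[OF vertices_ok PNode.prems])
    ultimately show ?case
      by (simp add: child_types_def)
  qed
  moreover have "t \<in> set (level_order [t])"
    using level_order_unfold[of "[t]"] by simp
  ultimately show "wf_dtree d t" .
qed

lemma map_snd_pgens: "map snd (pgens xs k) = (children ^^ k) (map snd xs)"
proof (induction k)
  case (Suc k)
  have "map snd (pgens xs (Suc k)) = children (map snd (pgens xs k))"
    by (simp add: children_def map_concat comp_def case_prod_beta)
  then show ?case
    by (simp only: Suc.IH funpow.simps comp_apply)
qed simp

lemma vertices_eq_level_order: "vertices ts = concat (map (\<lambda>t. level_order [t]) ts)"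
proof -
  have bfs_tree: "map snd (bfs_tree t) = level_order [t]" for t :: "nat ptree"
    using concat_generations[of "[t]" "nverts t"]
    by (simp add: bfs_tree_def map_concat comp_def map_snd_pgens)
  show ?thesis
    by (simp add: vertices_def bfs_forest_def map_concat comp_def bfs_tree)
qed

lemma vertices_Nil [simp]: "vertices [] = []"
  and vertices_Cons [simp]: "vertices (t # ts) = level_order [t] @ vertices ts"
  by (simp_all add: vertices_eq_level_order)

lemma wf_dtree_vertices: "\<forall>t\<in>set ts. wf_dtree d t \<Longrightarrow> v \<in> set (vertices ts) \<Longrightarrow> wf_dtree d v"
  using wf_dtree_level_order[of "[t]" d v for t] by (auto simp: vertices_eq_level_order)

lemma wf_forest_iff_vertices:
  "(\<forall>t\<in>set ts. wf_dtree d t) \<longleftrightarrow> (\<forall>v\<in>set (vertices ts). label v \<in> {1..d} \<and> sorted (child_types v))"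
  by (induction ts) (auto simp: wf_dtree_iff_level_order)

lemma count_labels_vertices:
  "count_list (map label (vertices ts)) j =
     count_list (map label ts) j + count_list (concat (map child_types (vertices ts))) j"
proof (induction ts)
  case (Cons t ts)
  have "count_list (map label (level_order [t])) j =
        count_list [label t] j + count_list (concat (map child_types (level_order [t]))) j"
    using arg_cong[OF labels_level_order[of "[t]"], of "\<lambda>xs. count_list xs j"] by simp
  then show ?case
    using Cons by simp
qed simp

lemma nverts_le_length_vertices: "t \<in> set ts \<Longrightarrow> nverts t \<le> length (vertices ts)"
proof (induction ts)
  case (Cons u ts)
  then show ?case
    using length_level_order[of "[u]"] by auto
qed simp

lemma bfs_forest_parent:
  assumes "(Some a, v) \<in> set (bfs_forest ts)"
  shows "\<exists>w\<in>set (vertices ts). a = label w \<and> v \<in> set (kids w)"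
proof -
  obtain t k where t: "t \<in> set ts" and k: "(Some a, v) \<in> set (pgens [(None, t)] k)"
    using assms by (auto simp: bfs_forest_def bfs_tree_def)
  then obtain k' where "k = Suc k'"
    by (cases k) auto
  with k obtain p w where pw: "(p, w) \<in> set (pgens [(None, t)] k')" and "a = label w" "v \<in> set (kids w)"
    by auto
  moreover have "w \<in> set (map snd (pgens [(None, t)] k'))"
    using pw by force
  then have "w \<in> set (vertices ts)"
    using generation_subset_level_order[of k' "[t]"] t
    by (auto simp: map_snd_pgens vertices_eq_level_order)
  ultimately show ?thesis
    by blast
qed

section \<open>Properly coloured forests and their queues\<close>

definition properly_coloured :: "nat ptree list \<Rightarrow> bool" where
  "properly_coloured ts \<longleftrightarrow> (\<forall>v\<in>set (vertices ts). \<forall>w\<in>set (kids v). label w \<noteq> label v)"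

text \<open>Every subtree of type \<open>i\<close> is then a single vertex.\<close>

lemma useq_properly_coloured:
  assumes "properly_coloured ts"
  shows "useq i ts = filter (\<lambda>v. label v = i) (vertices ts)"
proof -
  let ?vs = "filter (\<lambda>v. label v = i) (vertices ts)"
  have "filter (\<lambda>(p, v). label v = i \<and> p \<noteq> Some i) (bfs_forest ts) =
        filter (\<lambda>p. label (snd p) = i) (bfs_forest ts)"
  proof (rule filter_cong[OF refl])
    fix x assume x: "x \<in> set (bfs_forest ts)"
    obtain p v where pv: "x = (p, v)"
      by force
    show "(case x of (p, v) \<Rightarrow> label v = i \<and> p \<noteq> Some i) = (label (snd x) = i)"
      using bfs_forest_parent[of i v ts] x pv assms unfolding properly_coloured_def by fastforce
  qed
  then have roots: "sub_roots i ts = ?vs"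
    unfolding sub_roots_def by (simp add: filter_map vertices_def comp_def)
  have "restr i v = PNode v []" if "v \<in> set ?vs" for v
  proof -
    have "\<forall>w\<in>set (kids v). label w \<noteq> i"
      using assms that by (auto simp: properly_coloured_def)
    then show ?thesis
      by (cases v) (auto simp: filter_empty_conv)
  qed
  then have "subforest i ts = map (\<lambda>v. PNode v []) ?vs"
    unfolding subforest_def roots by simp
  moreover have "bfs_forest (map (\<lambda>v. PNode v []) vs) = map (\<lambda>v. (None, PNode v [])) vs" for vs :: "nat ptree list"
    by (induction vs) (auto simp: bfs_forest_def bfs_tree_def)
  ultimately show ?thesis
    unfolding useq_def by (simp add: comp_def)
qed

type_synonym queues = "nat \<Rightarrow> nat list list"

definition type_queues :: "nat ptree list \<Rightarrow> queues" where
  "type_queues vs i = map child_types (filter (\<lambda>v. label v = i) vs)"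

lemma type_queues_Nil [simp]: "type_queues [] i = []"
  and type_queues_append [simp]: "type_queues (vs @ ws) i = type_queues vs i @ type_queues ws i"
  by (simp_all add: type_queues_def)

lemma length_type_queues: "length (type_queues vs i) = count_list (map label vs) i"
  by (induction vs) (simp_all add: type_queues_def)

lemma type_queues_eq_labelled_entries:
  "type_queues vs i = labelled_entries (map label vs) (map child_types vs) i"
  by (induction vs) (simp_all add: type_queues_def)

lemma sum_length_type_queues:
  "set (map label vs) \<subseteq> {1..d} \<Longrightarrow> (\<Sum>i\<in>{1..d}. length (type_queues vs i)) = length vs"
  using sum_count_set[of "map label vs" "{1..d}"] by (simp add: length_type_queues)

definition Psi_queues :: "nat \<Rightarrow> queues \<Rightarrow> (nat \<Rightarrow> nat) \<times> (nat \<Rightarrow> nat \<Rightarrow> nat \<Rightarrow> int)" where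
  "Psi_queues d Y =
     ((\<lambda>i. if i \<in> {1..d} then length (Y i) else 0),
      (\<lambda>i j n. if i \<in> {1..d} \<and> j \<in> {1..d} \<and> n \<le> length (Y i)
               then (\<Sum>k<n. int (count_list (Y i ! k) j) - (if i = j then 1 else 0))
               else 0))"

lemma Psi_properly_coloured:
  assumes "properly_coloured ts"
  shows "Psi d ts = Psi_queues d (type_queues (vertices ts))"
  unfolding Psi_def Psi_queues_def type_queues_def useq_properly_coloured[OF assms]
  by (auto simp: fun_eq_iff pcount_def child_types_def length_filter_eq_count_list intro!: sum.cong)

definition proper_queues :: "nat \<Rightarrow> queues \<Rightarrow> bool" where
  "proper_queues d Y \<longleftrightarrow> (\<forall>i. i \<notin> {1..d} \<longrightarrow> Y i = []) \<and>
     (\<forall>i. \<forall>s\<in>set (Y i). sorted s \<and> set s \<subseteq> {1..d} \<and> i \<notin> set s)"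

lemma proper_type_queues:
  assumes wf: "\<forall>t\<in>set ts. wf_dtree d t" and coloured: "properly_coloured ts"
  shows "proper_queues d (type_queues (vertices ts))"
  unfolding proper_queues_def
proof (intro conjI allI impI ballI)
  fix i assume "i \<notin> {1..d}"
  then show "type_queues (vertices ts) i = []"
    using wf_dtree_vertices[OF wf] wf_dtree_root
    by (fastforce simp: type_queues_def filter_empty_conv)
next
  fix i s assume "s \<in> set (type_queues (vertices ts) i)"
  then obtain v where v: "v \<in> set (vertices ts)" "label v = i" "s = child_types v"
    by (auto simp: type_queues_def)
  then have "wf_dtree d v"
    using wf_dtree_vertices[OF wf] by blast
  then show "sorted s" "set s \<subseteq> {1..d}"
    using wf_dtree_root wf_dtree_child_types v(3) by auto
  show "i \<notin> set s"
    using coloured v unfolding properly_coloured_def child_types_def by fastforce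
qed

lemma barFr_D:
  assumes "ts \<in> barFr d r"
  shows "\<forall>t\<in>set ts. wf_dtree d t" "properly_coloured ts" "map label ts \<in> Cdr d r"
    "\<forall>i\<in>{1..d}. type_queues (vertices ts) i \<noteq> []"
  using assms unfolding barFr_def Fr_def Fd_def properly_coloured_def root_types_def
  by (auto simp: type_queues_def filter_empty_conv)

lemma barFr_I:
  assumes proper: "proper_queues d (type_queues (vertices ts))" and roots: "map label ts \<in> Cdr d r"
    and nonempty: "\<forall>i\<in>{1..d}. type_queues (vertices ts) i \<noteq> []"
  shows "ts \<in> barFr d r"
proof -
  have entry: "child_types v \<in> set (type_queues (vertices ts) (label v))" if "v \<in> set (vertices ts)" for v
    using that by (auto simp: type_queues_def)
  have vertex: "label v \<in> {1..d}" "sorted (child_types v)" "label v \<notin> set (child_types v)"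
    if "v \<in> set (vertices ts)" for v
    using proper entry[OF that] unfolding proper_queues_def by (fastforce, blast+)
  have "\<forall>t\<in>set ts. wf_dtree d t"
    unfolding wf_forest_iff_vertices using vertex by blast
  moreover have "properly_coloured ts"
    unfolding properly_coloured_def
  proof (intro ballI)
    fix v w assume v: "v \<in> set (vertices ts)" and "w \<in> set (kids v)"
    then have "label w \<in> set (child_types v)"
      by (simp add: child_types_def)
    with vertex(3)[OF v] show "label w \<noteq> label v"
      by auto
  qed
  moreover have "\<exists>v\<in>set (vertices ts). label v = i" if "i \<in> {1..d}" for i
    using nonempty that by (auto simp: type_queues_def filter_empty_conv)
  ultimately show ?thesis
    using roots unfolding barFr_def Fr_def Fd_def properly_coloured_def root_types_def
    by (auto simp: Cdr_def)
qed

lemma fst_Psi_queues: "i \<in> {1..d} \<Longrightarrow> fst (Psi_queues d Y) i = length (Y i)"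
  by (simp add: Psi_queues_def)

lemma snd_Psi_queues:
  assumes "i \<in> {1..d}" "j \<in> {1..d}" "n \<le> length (Y i)"
  shows "snd (Psi_queues d Y) i j n =
           int (count_list (concat (take n (Y i))) j) - (if i = j then int n else 0)"
  using assms sum_count_list_nth_take[OF assms(3), of j, symmetric]
  by (simp add: Psi_queues_def sum_subtractf)

lemma snd_Psi_queues_Suc:
  assumes "i \<in> {1..d}" "j \<in> {1..d}" "k < length (Y i)"
  shows "snd (Psi_queues d Y) i j (Suc k) =
           snd (Psi_queues d Y) i j k + int (count_list (Y i ! k) j) - (if i = j then 1 else 0)"
  using assms by (simp add: Psi_queues_def)

lemma snd_Psi_queues_diagonal:
  assumes "proper_queues d Y" "i \<in> {1..d}" "k \<le> length (Y i)"
  shows "snd (Psi_queues d Y) i i k = - int k"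
proof -
  have "count_list (concat (take k (Y i))) i = 0"
    using assms(1) by (auto simp: proper_queues_def count_list_0_iff dest: in_set_takeD)
  then show ?thesis
    using snd_Psi_queues[where Y=Y, OF assms(2,2,3)] by simp
qed

lemma Psi_queues_in_barSr:
  assumes proper: "proper_queues d Y" and nonempty: "\<forall>i\<in>{1..d}. Y i \<noteq> []"
    and smallest: "is_smallest_solution d r (fst (Psi_queues d Y)) (snd (Psi_queues d Y)) (fst (Psi_queues d Y))"
  shows "Psi_queues d Y \<in> barSr d r"
proof -
  define q where "q = fst (Psi_queues d Y)"
  define x where "x = snd (Psi_queues d Y)"
  have qx: "Psi_queues d Y = (q, x)"
    by (simp add: q_def x_def)
  have q: "q i = (if i \<in> {1..d} then length (Y i) else 0)" for i
    by (simp add: q_def Psi_queues_def)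
  have x: "x i j n = 0" if "i \<notin> {1..d} \<or> j \<notin> {1..d} \<or> q i < n" for i j n
    using that q by (auto simp: x_def Psi_queues_def)
  have x_Suc: "x i j (Suc k) = x i j k + int (count_list (Y i ! k) j) - (if i = j then 1 else 0)"
    if "i \<in> {1..d}" "j \<in> {1..d}" "k < q i" for i j k
    using snd_Psi_queues_Suc[of i d j k Y] that q by (simp add: x_def)
  have x_diag: "x i i k = - int k" if "i \<in> {1..d}" "k \<le> q i" for i k
    using snd_Psi_queues_diagonal[OF proper that(1), of k] that q by (simp add: x_def)
  have "(q, x) \<in> Sd_fin d"
    unfolding Sd_fin_def
  proof (simp only: mem_Collect_eq case_prod_conv, intro conjI allI ballI impI)
    fix i j assume "i \<in> {1..d}" "j \<in> {1..d}"
    then show "x i j 0 = 0"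
      by (simp add: x_def Psi_queues_def)
  next
    fix i j n assume "i \<in> {1..d}" "j \<in> {1..d}" "i \<noteq> j" "n < q i"
    then show "x i j n \<le> x i j (Suc n)"
      using x_Suc by simp
  next
    fix i n assume "i \<in> {1..d}" "n < q i"
    then show "- 1 \<le> x i i (Suc n) - x i i n"
      using x_diag by simp
  qed (use q x in auto)
  moreover have "\<forall>i\<in>{1..d}. q i \<ge> 1"
    using nonempty q by (simp add: Suc_leI)
  ultimately show ?thesis
    using smallest x_diag qx unfolding barSr_def Sr_def by simp
qed

lemma Psi_queues_inj:
  assumes proper1: "proper_queues d Y1" and proper2: "proper_queues d Y2"
    and eq: "Psi_queues d Y1 = Psi_queues d Y2"
  shows "Y1 = Y2"
proof
  fix i
  show "Y1 i = Y2 i"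
  proof (cases "i \<in> {1..d}")
    case False
    then show ?thesis
      using proper1 proper2 by (simp add: proper_queues_def)
  next
    case i: True
    have len: "length (Y1 i) = length (Y2 i)"
      using fst_Psi_queues[OF i, of Y1] fst_Psi_queues[OF i, of Y2] eq by simp
    show ?thesis
    proof (rule nth_equalityI[OF len])
      fix k assume k: "k < length (Y1 i)"
      have entries: "Y1 i ! k \<in> set (Y1 i)" "Y2 i ! k \<in> set (Y2 i)"
        using k len by auto
      have "count_list (Y1 i ! k) j = count_list (Y2 i ! k) j" for j
      proof (cases "j \<in> {1..d}")
        case True
        then show ?thesis
          using snd_Psi_queues_Suc[where Y=Y1, OF i True k] snd_Psi_queues_Suc[where Y=Y2, OF i True] k len eq
          by simp
      next
        case False
        then have "j \<notin> set (Y1 i ! k)" "j \<notin> set (Y2 i ! k)"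
          using entries proper1 proper2 unfolding proper_queues_def by blast+
        then show ?thesis
          by simp
      qed
      then show "Y1 i ! k = Y2 i ! k"
        using entries proper1 proper2 by (intro sorted_eqI_count_list) (auto simp: proper_queues_def)
    qed
  qed
qed

lemma is_smallest_solution_cong:
  "\<forall>i\<in>{1..d}. s i = s' i \<Longrightarrow> is_smallest_solution d r q x s \<longleftrightarrow> is_smallest_solution d r q x s'"
  unfolding is_smallest_solution_def is_solution_def by simp

section \<open>Balanced queues and solutions\<close>

text \<open>Balance: for each type \<open>j\<close>, the queue of type \<open>j\<close> has one entry per type-\<open>j\<close>
  vertex still to be produced, namely the pending roots \<open>ls\<close> and the children announced by
  the queue entries.\<close>

definition queue_balance :: "nat \<Rightarrow> nat list \<Rightarrow> queues \<Rightarrow> bool" where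
  "queue_balance d ls Y \<longleftrightarrow>
     (\<forall>j. count_list ls j + (\<Sum>i\<in>{1..d}. count_list (concat (Y i)) j) = length (Y j))"

lemma type_queues_balanced:
  assumes "set (map label (vertices ts)) \<subseteq> {1..d}"
  shows "queue_balance d (map label ts) (type_queues (vertices ts))"
  using sum_count_labelled_entries[OF _ assms, of "map child_types (vertices ts)"] length_map
    count_labels_vertices[of ts] length_type_queues[of "vertices ts"]
  by (simp add: queue_balance_def type_queues_eq_labelled_entries)

lemma Cdr_count_list: "c \<in> Cdr d r \<Longrightarrow> set c \<subseteq> {1..d} \<and> (\<forall>j\<in>{1..d}. count_list c j = r j)"
  by (auto simp: Cdr_def length_filter_eq_count_list[where f = "\<lambda>x. x", simplified])

lemma sum_snd_Psi_queues:
  assumes j: "j \<in> {1..d}" and s: "\<forall>i\<in>{1..d}. s i \<le> length (Y i)"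
  shows "(\<Sum>i=1..d. snd (Psi_queues d Y) i j (s i)) =
           int (\<Sum>i\<in>{1..d}. count_list (concat (take (s i) (Y i))) j) - int (s j)"
proof -
  have "(\<Sum>i=1..d. snd (Psi_queues d Y) i j (s i)) =
        (\<Sum>i=1..d. int (count_list (concat (take (s i) (Y i))) j) - (if i = j then int (s i) else 0))"
    using s j by (intro sum.cong refl) (simp add: snd_Psi_queues)
  then show ?thesis
    using j by (simp add: sum_subtractf sum.delta')
qed

lemma solution_iff_balanced_prefix:
  assumes proper: "proper_queues d Y" and c: "c \<in> Cdr d r"
    and s: "\<forall>i\<in>{1..d}. s i \<le> length (Y i)"
  shows "is_solution d r (fst (Psi_queues d Y)) (snd (Psi_queues d Y)) s \<longleftrightarrow>
           queue_balance d c (\<lambda>i. take (s i) (Y i))"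
proof -
  let ?count = "\<lambda>j. \<Sum>i\<in>{1..d}. count_list (concat (take (s i) (Y i))) j"
  have outside: "count_list c j = 0 \<and> ?count j = 0 \<and> Y j = []" if j: "j \<notin> {1..d}" for j
  proof -
    have "j \<notin> set c"
      using j Cdr_count_list[OF c] by blast
    moreover have "j \<notin> set e" if "e \<in> set (Y i)" for i e
      using j that proper unfolding proper_queues_def by blast
    ultimately show ?thesis
      using j proper by (auto simp: proper_queues_def count_list_0_iff dest: in_set_takeD)
  qed
  have prefix_length: "length (take (s j) (Y j)) = s j" if "j \<in> {1..d}" for j
    using s that by simp
  have "is_solution d r (fst (Psi_queues d Y)) (snd (Psi_queues d Y)) s \<longleftrightarrow>
          (\<forall>j\<in>{1..d}. r j + ?count j = s j)"
  proof -
    have "int (r j) + (\<Sum>i=1..d. snd (Psi_queues d Y) i j (s i)) = 0 \<longleftrightarrow> r j + ?count j = s j"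
      if "j \<in> {1..d}" for j
      using sum_snd_Psi_queues[OF that s] by linarith
    then show ?thesis
      unfolding is_solution_def using s by (simp add: fst_Psi_queues)
  qed
  also have "\<dots> \<longleftrightarrow> queue_balance d c (\<lambda>i. take (s i) (Y i))"
    unfolding queue_balance_def
  proof (intro iffI allI ballI)
    fix j
    assume "\<forall>j\<in>{1..d}. r j + ?count j = s j"
    then show "count_list c j + ?count j = length (take (s j) (Y j))"
      using outside[of j] prefix_length[of j] Cdr_count_list[OF c] by (cases "j \<in> {1..d}") auto
  next
    fix j assume j: "j \<in> {1..d}" and "\<forall>j. count_list c j + ?count j = length (take (s j) (Y j))"
    then have "count_list c j + ?count j = s j"
      using prefix_length[OF j] by metis
    then show "r j + ?count j = s j"
      using j Cdr_count_list[OF c] by simp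
  qed
  finally show ?thesis .
qed

section \<open>Breadth-first decoding\<close>

text \<open>The labels \<open>ls\<close> of a generation pull their child-type lists from
  the front of their queues, which gives the labels of the next generation. The fuel \<open>n\<close> bounds
  the number of generations.\<close>

primrec dequeue :: "nat list \<Rightarrow> queues \<Rightarrow> (nat list list \<times> queues) option" where
  "dequeue [] Y = Some ([], Y)"
| "dequeue (l # ls) Y = (case Y l of [] \<Rightarrow> None | s # rest \<Rightarrow>
      (case dequeue ls (Y(l := rest)) of None \<Rightarrow> None | Some (ss, Y') \<Rightarrow> Some (s # ss, Y')))"

primrec split_by_lengths :: "'b list list \<Rightarrow> 'a list \<Rightarrow> 'a list list" where
  "split_by_lengths [] xs = []"
| "split_by_lengths (s # ss) xs = take (length s) xs # split_by_lengths ss (drop (length s) xs)"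

primrec decode_level :: "nat \<Rightarrow> nat list \<Rightarrow> queues \<Rightarrow> (nat ptree list \<times> queues) option" where
  "decode_level 0 ls Y = (if ls = [] then Some ([], Y) else None)"
| "decode_level (Suc n) ls Y = (if ls = [] then Some ([], Y) else
     (case dequeue ls Y of None \<Rightarrow> None | Some (ss, Y1) \<Rightarrow>
        (case decode_level n (concat ss) Y1 of None \<Rightarrow> None
          | Some (us, Y2) \<Rightarrow> Some (map2 PNode ls (split_by_lengths ss us), Y2))))"

primrec decode_forest :: "nat \<Rightarrow> nat list \<Rightarrow> queues \<Rightarrow> (nat ptree list \<times> queues) option" where
  "decode_forest n [] Y = Some ([], Y)"
| "decode_forest n (a # as) Y = (case decode_level n [a] Y of None \<Rightarrow> None | Some (ts, Y1) \<Rightarrow>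
      (case decode_forest n as Y1 of None \<Rightarrow> None | Some (ts', Y2) \<Rightarrow> Some (ts @ ts', Y2)))"

lemma split_by_lengths_concat:
  "map length ss = map length ks \<Longrightarrow> split_by_lengths ss (concat ks) = ks"
proof (induction ss arbitrary: ks)
  case (Cons s ss)
  then show ?case
    by (cases ks) auto
qed simp

lemma length_split_by_lengths [simp]: "length (split_by_lengths ss xs) = length ss"
  by (induction ss arbitrary: xs) auto

lemma map_map_split_by_lengths: "map (map f) (split_by_lengths ss xs) = split_by_lengths ss (map f xs)"
  by (induction ss arbitrary: xs) (auto simp: take_map drop_map)

lemma concat_split_by_lengths:
  "concat (split_by_lengths ss xs) = take (sum_list (map length ss)) xs"
  by (induction ss arbitrary: xs) (auto simp: take_add)

lemma map2_PNode_label_kids: "map2 PNode (map label ts) (map kids ts) = ts"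
proof (induction ts)
  case (Cons t ts)
  then show ?case
    by (cases t) auto
qed simp

lemma label_kids_map2_PNode:
  "length ks = length ls \<Longrightarrow> map label (map2 PNode ls ks) = ls \<and> map kids (map2 PNode ls ks) = ks"
proof (induction ls arbitrary: ks)
  case (Cons l ls)
  then show ?case
    by (cases ks) auto
qed simp

lemma dequeue_type_queues:
  "(\<forall>i. Y i = type_queues vs i @ Z i) \<Longrightarrow> dequeue (map label vs) Y = Some (map child_types vs, Z)"
proof (induction vs arbitrary: Y)
  case (Cons v vs)
  let ?l = "label v"
  have "Y ?l = child_types v # (type_queues vs ?l @ Z ?l)"
    using Cons.prems[rule_format, of ?l] by (simp add: type_queues_def)
  moreover have "dequeue (map label vs) (Y(?l := type_queues vs ?l @ Z ?l)) = Some (map child_types vs, Z)"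
    using Cons.prems by (intro Cons.IH) (auto simp: type_queues_def)
  ultimately show ?case
    by simp
qed (simp add: fun_eq_iff)

lemma decode_level_complete:
  "forest_size ts \<le> n \<Longrightarrow> (\<forall>i. Y i = type_queues (level_order ts) i @ Z i) \<Longrightarrow>
     decode_level n (map label ts) Y = Some (ts, Z)"
proof (induction n arbitrary: ts Y)
  case 0
  then show ?case
    by (auto simp: fun_eq_iff)
next
  case (Suc n)
  show ?case
  proof (cases "ts = []")
    case False
    let ?Y1 = "\<lambda>i. type_queues (level_order (children ts)) i @ Z i"
    have "\<forall>i. Y i = type_queues ts i @ ?Y1 i"
      using Suc.prems(2) level_order_unfold[of ts] by simp
    then have "dequeue (map label ts) Y = Some (map child_types ts, ?Y1)"
      by (rule dequeue_type_queues)
    moreover have "forest_size (children ts) \<le> n"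
      using False Suc.prems(1) forest_size_children[of ts] by (cases ts) auto
    then have "decode_level n (concat (map child_types ts)) ?Y1 = Some (children ts, Z)"
      using Suc.IH[of "children ts" ?Y1] by (simp add: labels_children)
    moreover have "split_by_lengths (map child_types ts) (children ts) = map kids ts"
      using split_by_lengths_concat[of "map child_types ts" "map kids ts"]
      by (simp add: children_def child_types_def comp_def)
    ultimately show ?thesis
      using False map2_PNode_label_kids[of ts] by simp
  qed (simp add: Suc.prems fun_eq_iff)
qed

lemma decode_forest_complete:
  "(\<forall>t\<in>set ts. nverts t \<le> n) \<Longrightarrow> (\<forall>i. Y i = type_queues (vertices ts) i @ Z i) \<Longrightarrow>
     decode_forest n (map label ts) Y = Some (ts, Z)"
proof (induction ts arbitrary: Y)
  case (Cons t ts)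
  let ?Y1 = "\<lambda>i. type_queues (vertices ts) i @ Z i"
  have "decode_level n (map label [t]) Y = Some ([t], ?Y1)"
    using Cons.prems by (intro decode_level_complete) auto
  moreover have "decode_forest n (map label ts) ?Y1 = Some (ts, Z)"
    using Cons.prems(1) by (intro Cons.IH) auto
  ultimately show ?case
    by simp
qed (simp add: fun_eq_iff)

lemma decode_type_queues:
  assumes "\<forall>t\<in>set ts. wf_dtree d t"
  shows "decode_forest (Suc (\<Sum>i\<in>{1..d}. length (type_queues (vertices ts) i))) (map label ts)
           (type_queues (vertices ts)) = Some (ts, \<lambda>_. [])"
proof -
  have "set (map label (vertices ts)) \<subseteq> {1..d}"
    using wf_dtree_vertices[OF assms] wf_dtree_root by fastforce
  then have "(\<Sum>i\<in>{1..d}. length (type_queues (vertices ts) i)) = length (vertices ts)"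
    by (rule sum_length_type_queues)
  then show ?thesis
    using nverts_le_length_vertices[of _ ts] by (intro decode_forest_complete) (simp_all add: le_SucI)
qed

lemma dequeue_sound:
  "dequeue ls Y = Some (ss, Y') \<Longrightarrow> length ss = length ls \<and> (\<forall>i. Y i = labelled_entries ls ss i @ Y' i)"
proof (induction ls arbitrary: Y ss)
  case (Cons l ls)
  then obtain s rest ss' where "Y l = s # rest" "dequeue ls (Y(l := rest)) = Some (ss', Y')" "ss = s # ss'"
    by (auto split: list.splits option.splits)
  with Cons.IH show ?case
    by (auto split: if_splits)
qed simp

lemma decode_level_sound:
  "decode_level n ls Y = Some (ts, Z) \<Longrightarrow>
     map label ts = ls \<and> (\<forall>i. Y i = type_queues (level_order ts) i @ Z i)"
proof (induction n arbitrary: ls Y ts)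
  case (Suc n)
  show ?case
  proof (cases "ls = []")
    case False
    with Suc.prems obtain ss Y1 us where dequeue: "dequeue ls Y = Some (ss, Y1)"
      and decode: "decode_level n (concat ss) Y1 = Some (us, Z)"
      and ts: "ts = map2 PNode ls (split_by_lengths ss us)"
      by (auto split: option.splits)
    from dequeue_sound[OF dequeue] have len: "length ss = length ls"
      and Y: "\<forall>i. Y i = labelled_entries ls ss i @ Y1 i" by auto
    from Suc.IH[OF decode] have labels_us: "map label us = concat ss"
      and Y1: "\<forall>i. Y1 i = type_queues (level_order us) i @ Z i" by auto
    have labels: "map label ts = ls" and kids: "map kids ts = split_by_lengths ss us"
      using label_kids_map2_PNode[of "split_by_lengths ss us" ls] len ts by auto
    have "length us = sum_list (map length ss)"
      using arg_cong[OF labels_us, of length] by (simp add: length_concat)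
    then have children: "children ts = us"
      using kids concat_split_by_lengths[of ss us] by (simp add: children_def)
    have "map child_types ts = map (map label) (map kids ts)"
      by (simp add: child_types_def)
    also have "\<dots> = ss"
      using kids map_map_split_by_lengths[of label ss us] labels_us split_by_lengths_concat[of ss ss]
      by simp
    finally have "\<forall>i. type_queues ts i = labelled_entries ls ss i"
      using labels type_queues_eq_labelled_entries by metis
    then show ?thesis
      using labels Y Y1 children level_order_unfold[of ts] by simp
  qed (use Suc.prems in auto)
qed (auto split: if_splits)

lemma decode_forest_sound:
  "decode_forest n c Y = Some (ts, Z) \<Longrightarrow>
     map label ts = c \<and> (\<forall>i. Y i = type_queues (vertices ts) i @ Z i)"
proof (induction c arbitrary: Y ts)
  case (Cons a c)
  from Cons.prems obtain us Y1 ts' where first: "decode_level n [a] Y = Some (us, Y1)"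
    and rest: "decode_forest n c Y1 = Some (ts', Z)" and ts: "ts = us @ ts'"
    by (auto split: option.splits)
  from decode_level_sound[OF first] obtain t where "us = [t]" "label t = a"
    and "\<forall>i. Y i = type_queues (level_order [t]) i @ Y1 i"
    by (cases us) auto
  with Cons.IH[OF rest] show ?case
    using ts by simp
qed simp

lemma dequeue_append_queues:
  "dequeue ls Y = Some (ss, Y') \<Longrightarrow> dequeue ls (\<lambda>i. Y i @ W i) = Some (ss, \<lambda>i. Y' i @ W i)"
proof (induction ls arbitrary: Y ss)
  case (Cons l ls)
  from Cons.prems obtain s rest ss' where Y: "Y l = s # rest"
    and rest: "dequeue ls (Y(l := rest)) = Some (ss', Y')" and ss: "ss = s # ss'"
    by (auto split: list.splits option.splits)
  have "(\<lambda>i. Y i @ W i)(l := rest @ W l) = (\<lambda>i. (Y(l := rest)) i @ W i)"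
    by auto
  then show ?case
    using Y ss Cons.IH[OF rest] by simp
qed simp

lemma decode_level_append_queues:
  "decode_level n ls Y = Some (ts, Z) \<Longrightarrow> decode_level n ls (\<lambda>i. Y i @ W i) = Some (ts, \<lambda>i. Z i @ W i)"
proof (induction n arbitrary: ls Y ts)
  case (Suc n)
  show ?case
  proof (cases "ls = []")
    case False
    with Suc.prems obtain ss Y1 us where "dequeue ls Y = Some (ss, Y1)"
      and "decode_level n (concat ss) Y1 = Some (us, Z)" "ts = map2 PNode ls (split_by_lengths ss us)"
      by (auto split: option.splits)
    then show ?thesis
      using dequeue_append_queues Suc.IH False by simp
  qed (use Suc.prems in auto)
qed (auto split: if_splits)

lemma decode_forest_append_queues:
  "decode_forest n c Y = Some (ts, Z) \<Longrightarrow> decode_forest n c (\<lambda>i. Y i @ W i) = Some (ts, \<lambda>i. Z i @ W i)"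
proof (induction c arbitrary: Y ts)
  case (Cons a c)
  from Cons.prems obtain us Y1 ts' where "decode_level n [a] Y = Some (us, Y1)"
    and "decode_forest n c Y1 = Some (ts', Z)" "ts = us @ ts'"
    by (auto split: option.splits)
  then show ?case
    using decode_level_append_queues Cons.IH by simp
qed simp

lemma dequeue_succeeds: "\<forall>l. count_list ls l \<le> length (Y l) \<Longrightarrow> \<exists>ss Y'. dequeue ls Y = Some (ss, Y')"
proof (induction ls arbitrary: Y)
  case (Cons l ls)
  from Cons.prems[rule_format, of l] obtain s rest where Y: "Y l = s # rest"
    by (cases "Y l") auto
  have "\<forall>l'. count_list ls l' \<le> length ((Y(l := rest)) l')"
  proof
    fix l'
    show "count_list ls l' \<le> length ((Y(l := rest)) l')"
      using Cons.prems[rule_format, of l'] Y by (cases "l' = l") auto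
  qed
  then obtain ss Y' where "dequeue ls (Y(l := rest)) = Some (ss, Y')"
    using Cons.IH by blast
  then show ?case
    using Y by simp
qed simp

lemma dequeue_lengths:
  "dequeue ls Y = Some (ss, Y') \<Longrightarrow> length (Y j) = count_list ls j + length (Y' j)"
  using dequeue_sound[of ls Y ss Y'] length_labelled_entries[of ss ls j] by (metis length_append)

lemma dequeue_preserves_balance:
  assumes dequeue: "dequeue ls Y = Some (ss, Y')" and labels: "set ls \<subseteq> {1..d}"
    and balance: "queue_balance d (ls @ pending) Y"
  shows "queue_balance d (concat ss @ pending) Y'"
  unfolding queue_balance_def
proof
  fix j
  obtain len: "length ss = length ls" and Y: "\<forall>i. Y i = labelled_entries ls ss i @ Y' i"
    using dequeue_sound[OF dequeue] by blast
  have "(\<Sum>i\<in>{1..d}. count_list (concat (Y i)) j) =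
        (\<Sum>i\<in>{1..d}. count_list (concat (labelled_entries ls ss i)) j + count_list (concat (Y' i)) j)"
    by (intro sum.cong refl) (subst Y, simp)
  also have "\<dots> = count_list (concat ss) j + (\<Sum>i\<in>{1..d}. count_list (concat (Y' i)) j)"
    using sum_count_labelled_entries[OF _ labels len] by (simp add: sum.distrib)
  moreover have "count_list (ls @ pending) j + (\<Sum>i\<in>{1..d}. count_list (concat (Y i)) j) = length (Y j)"
    using balance unfolding queue_balance_def by blast
  ultimately show "count_list (concat ss @ pending) j + (\<Sum>i\<in>{1..d}. count_list (concat (Y' i)) j) =
      length (Y' j)"
    using dequeue_lengths[OF dequeue, of j] by simp
qed

lemma decode_level_succeeds:
  assumes "queue_balance d (ls @ pending) Y" "\<forall>i. i \<notin> {1..d} \<longrightarrow> Y i = []"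
    "ls \<noteq> [] \<Longrightarrow> (\<Sum>i\<in>{1..d}. length (Y i)) < n"
  shows "\<exists>ts Z. decode_level n ls Y = Some (ts, Z) \<and> queue_balance d pending Z"
  using assms
proof (induction n arbitrary: ls Y)
  case (Suc n)
  show ?case
  proof (cases "ls = []")
    case False
    have available: "\<forall>l. count_list ls l \<le> length (Y l)"
      using Suc.prems(1) unfolding queue_balance_def by (metis count_list_append le_add1 add.assoc)
    then obtain ss Y1 where dequeue: "dequeue ls Y = Some (ss, Y1)"
      using dequeue_succeeds by blast
    have labels: "set ls \<subseteq> {1..d}"
    proof
      fix l assume "l \<in> set ls"
      then have "Y l \<noteq> []"
        using available[rule_format, of l] by (auto simp: count_list_0_iff)
      then show "l \<in> {1..d}"
        using Suc.prems(2) by blast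
    qed
    have "(\<Sum>i\<in>{1..d}. length (Y i)) = length ls + (\<Sum>i\<in>{1..d}. length (Y1 i))"
      using dequeue_lengths[OF dequeue] sum_count_set[OF labels] by (simp add: sum.distrib)
    moreover have "length ls > 0"
      using False by simp
    ultimately have "(\<Sum>i\<in>{1..d}. length (Y1 i)) < n"
      using Suc.prems(3) False by linarith
    moreover have "\<forall>i. i \<notin> {1..d} \<longrightarrow> Y1 i = []"
      using Suc.prems(2) dequeue_lengths[OF dequeue] by (metis le_add2 le_zero_eq length_0_conv)
    ultimately obtain us Z where "decode_level n (concat ss) Y1 = Some (us, Z)" "queue_balance d pending Z"
      using Suc.IH dequeue_preserves_balance[OF dequeue labels Suc.prems(1)] by blast
    then show ?thesis
      using False dequeue by simp
  qed (use Suc.prems in simp)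
qed (use less_zeroE in fastforce)

lemma decode_forest_succeeds:
  assumes "queue_balance d c Y" "\<forall>i. i \<notin> {1..d} \<longrightarrow> Y i = []" "(\<Sum>i\<in>{1..d}. length (Y i)) < n"
  shows "\<exists>ts Z. decode_forest n c Y = Some (ts, Z)"
  using assms
proof (induction c arbitrary: Y)
  case (Cons a c)
  obtain us Y1 where first: "decode_level n [a] Y = Some (us, Y1)" and balance: "queue_balance d c Y1"
    using decode_level_succeeds[of d "[a]" c Y n] Cons.prems by auto
  obtain "\<forall>i. Y i = type_queues (level_order us) i @ Y1 i"
    using decode_level_sound[OF first] by blast
  then have "\<forall>i. i \<notin> {1..d} \<longrightarrow> Y1 i = []" "(\<Sum>i\<in>{1..d}. length (Y1 i)) < n"
    using Cons.prems(2,3) sum_mono[of "{1..d}" "\<lambda>i. length (Y1 i)" "\<lambda>i. length (Y i)"]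
    by (metis append_is_Nil_conv, fastforce)
  with Cons.IH[OF balance] first show ?case
    by fastforce
qed simp

section \<open>Decoding consumes the smallest solution\<close>

lemma decode_forest_consumes_balanced_prefixes:
  assumes outside: "\<forall>i. i \<notin> {1..d} \<longrightarrow> Y i = []" and decode: "decode_forest n c Y = Some (ts, Z)"
  shows "queue_balance d c (\<lambda>i. take (length (Y i) - length (Z i)) (Y i))"
proof -
  obtain labels: "map label ts = c" and Y: "\<forall>i. Y i = type_queues (vertices ts) i @ Z i"
    using decode_forest_sound[OF decode] by blast
  have prefix: "take (length (Y i) - length (Z i)) (Y i) = type_queues (vertices ts) i" for i
    using Y[rule_format, of i] by (metis add_diff_cancel_right' append_eq_conv_conj length_append)
  have "set (map label (vertices ts)) \<subseteq> {1..d}"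
  proof
    fix i assume "i \<in> set (map label (vertices ts))"
    then have "Y i \<noteq> []"
      using Y[rule_format, of i] by (auto simp: type_queues_def filter_empty_conv)
    then show "i \<in> {1..d}"
      using outside by blast
  qed
  then show ?thesis
    using type_queues_balanced[of ts d] labels prefix by simp
qed

text \<open>Decoding from balanced prefixes succeeds, and by \<open>decode_forest_append_queues\<close> it
  performs the same steps on the full queues.\<close>

lemma decode_forest_consumes_at_most_balanced_prefix:
  assumes outside: "\<forall>i. i \<notin> {1..d} \<longrightarrow> Y i = []" and fuel: "(\<Sum>i\<in>{1..d}. length (Y i)) < n"
    and decode: "decode_forest n c Y = Some (ts, Z)"
    and balance: "queue_balance d c (\<lambda>i. take (s i) (Y i))"
  shows "length (Y i) - length (Z i) \<le> s i"
proof -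
  let ?T = "\<lambda>i. take (s i) (Y i)"
  have "\<forall>i. i \<notin> {1..d} \<longrightarrow> ?T i = []"
    using outside by simp
  moreover have "(\<Sum>i\<in>{1..d}. length (?T i)) < n"
    using fuel sum_mono[of "{1..d}" "\<lambda>i. length (?T i)" "\<lambda>i. length (Y i)"] by simp
  ultimately obtain ts' Z' where "decode_forest n c ?T = Some (ts', Z')"
    using decode_forest_succeeds[OF balance] by blast
  from decode_forest_append_queues[OF this, of "\<lambda>i. drop (s i) (Y i)"]
  have "Z i = Z' i @ drop (s i) (Y i)"
    using decode by simp
  then show ?thesis
    by simp
qed

lemma type_queues_smallest_solution:
  assumes wf: "\<forall>t\<in>set ts. wf_dtree d t" and coloured: "properly_coloured ts"
    and roots: "map label ts \<in> Cdr d r"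
  shows "is_smallest_solution d r (fst (Psi_queues d (type_queues (vertices ts))))
           (snd (Psi_queues d (type_queues (vertices ts)))) (\<lambda>i. length (type_queues (vertices ts) i))"
proof -
  let ?Y = "type_queues (vertices ts)"
  have proper: "proper_queues d ?Y"
    using proper_type_queues[OF wf coloured] .
  then have outside: "\<forall>i. i \<notin> {1..d} \<longrightarrow> ?Y i = []"
    by (simp add: proper_queues_def)
  have "queue_balance d (map label ts) (\<lambda>i. take (length (?Y i)) (?Y i))"
    using decode_forest_consumes_balanced_prefixes[OF outside decode_type_queues[OF wf]] by simp
  then have "is_solution d r (fst (Psi_queues d ?Y)) (snd (Psi_queues d ?Y)) (\<lambda>i. length (?Y i))"
    using solution_iff_balanced_prefix[OF proper roots] by simp
  moreover have "length (?Y i) \<le> s i"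
    if "is_solution d r (fst (Psi_queues d ?Y)) (snd (Psi_queues d ?Y)) s" "i \<in> {1..d}" for s i
  proof -
    have "\<forall>i\<in>{1..d}. s i \<le> length (?Y i)"
      using that(1) by (simp add: is_solution_def fst_Psi_queues)
    then have "queue_balance d (map label ts) (\<lambda>i. take (s i) (?Y i))"
      using solution_iff_balanced_prefix[OF proper roots] that(1) by blast
    then show ?thesis
      using decode_forest_consumes_at_most_balanced_prefix[OF outside lessI decode_type_queues[OF wf]]
      by simp
  qed
  ultimately show ?thesis
    unfolding is_smallest_solution_def by blast
qed

lemma smallest_solution_queues_realised:
  assumes proper: "proper_queues d Y" and c: "c \<in> Cdr d r"
    and smallest: "is_smallest_solution d r (fst (Psi_queues d Y)) (snd (Psi_queues d Y)) (\<lambda>i. length (Y i))"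
  shows "\<exists>ts. map label ts = c \<and> type_queues (vertices ts) = Y"
proof -
  have outside: "\<forall>i. i \<notin> {1..d} \<longrightarrow> Y i = []"
    using proper by (simp add: proper_queues_def)
  have "queue_balance d c Y"
    using smallest solution_iff_balanced_prefix[OF proper c, of "\<lambda>i. length (Y i)"]
    by (simp add: is_smallest_solution_def)
  then obtain ts Z where decode: "decode_forest (Suc (\<Sum>i\<in>{1..d}. length (Y i))) c Y = Some (ts, Z)"
    using decode_forest_succeeds[OF _ outside lessI] by blast
  obtain labels: "map label ts = c" and Y: "\<forall>i. Y i = type_queues (vertices ts) i @ Z i"
    using decode_forest_sound[OF decode] by blast
  have "is_solution d r (fst (Psi_queues d Y)) (snd (Psi_queues d Y)) (\<lambda>i. length (Y i) - length (Z i))"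
    using solution_iff_balanced_prefix[OF proper c] decode_forest_consumes_balanced_prefixes[OF outside decode]
    by simp
  then have consumed: "\<forall>i\<in>{1..d}. length (Y i) \<le> length (Y i) - length (Z i)"
    using smallest unfolding is_smallest_solution_def by blast
  have "Z i = []" for i
  proof (cases "i \<in> {1..d}")
    case True
    have "length (Y i) = length (type_queues (vertices ts) i) + length (Z i)"
      using Y[rule_format, of i] by (metis length_append)
    moreover have "length (Y i) \<le> length (Y i) - length (Z i)"
      using consumed True by blast
    ultimately show ?thesis
      by simp
  qed (use outside Y in simp)
  then show ?thesis
    using labels Y by (auto simp: fun_eq_iff)
qed

lemma barSr_D:
  assumes "(q, x) \<in> barSr d r"
  shows "\<forall>i. i \<notin> {1..d} \<longrightarrow> q i = 0"
    "\<forall>i j n. (i \<notin> {1..d} \<or> j \<notin> {1..d} \<or> n > q i) \<longrightarrow> x i j n = 0"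
    "\<forall>i\<in>{1..d}. \<forall>j\<in>{1..d}. x i j 0 = 0"
    "\<forall>i\<in>{1..d}. \<forall>j\<in>{1..d}. i \<noteq> j \<longrightarrow> (\<forall>n < q i. x i j n \<le> x i j (Suc n))"
    "\<forall>i\<in>{1..d}. q i \<ge> 1" "is_smallest_solution d r q x q"
    "\<forall>i\<in>{1..d}. \<forall>k \<le> q i. x i i k = - int k"
  using assms unfolding barSr_def Sr_def Sd_fin_def by auto

text \<open>An increment list of the walk \<open>x\<^sup>(\<^sup>i\<^sup>)\<close>, as the sorted list of child types it records;
  the diagonal increment \<open>-1\<close> accounts for the vertex itself and contributes no child.\<close>

definition increment_types :: "(nat \<Rightarrow> nat \<Rightarrow> nat \<Rightarrow> int) \<Rightarrow> nat \<Rightarrow> nat \<Rightarrow> nat \<Rightarrow> nat list" where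
  "increment_types x d i k = concat (map (\<lambda>j. replicate (nat (x i j (Suc k) - x i j k)) j) [1..<Suc d])"

definition queues_of_walks :: "(nat \<Rightarrow> nat) \<Rightarrow> (nat \<Rightarrow> nat \<Rightarrow> nat \<Rightarrow> int) \<Rightarrow> nat \<Rightarrow> queues" where
  "queues_of_walks q x d i = (if i \<in> {1..d} then map (increment_types x d i) [0..<q i] else [])"

lemma sorted_increment_types: "sorted (increment_types x d i k)"
  unfolding increment_types_def
  by (induction d) (auto simp: sorted_append)

lemma set_increment_types: "set (increment_types x d i k) \<subseteq> {1..d}"
  by (auto simp: increment_types_def)

lemma count_increment_types:
  assumes "(q, x) \<in> barSr d r" "i \<in> {1..d}" "j \<in> {1..d}" "k < q i"
  shows "int (count_list (increment_types x d i k) j) = x i j (Suc k) - x i j k + (if i = j then 1 else 0)"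
proof (cases "i = j")
  case True
  have "x i i (Suc k) = - int (Suc k)" "x i i k = - int k"
    using barSr_D(7)[OF assms(1)] assms(2,4) by auto
  then show ?thesis
    using True assms(3) by (simp add: increment_types_def count_list_concat_replicates del: upt_Suc)
next
  case False
  have "x i j k \<le> x i j (Suc k)"
    using barSr_D(4)[OF assms(1)] assms False by blast
  then show ?thesis
    using False assms(3) by (simp add: increment_types_def count_list_concat_replicates del: upt_Suc)
qed

lemma proper_queues_of_walks:
  assumes "(q, x) \<in> barSr d r"
  shows "proper_queues d (queues_of_walks q x d)"
  unfolding proper_queues_def
proof (intro conjI allI impI ballI)
  fix i s assume "s \<in> set (queues_of_walks q x d i)"
  then obtain k where i: "i \<in> {1..d}" and k: "k < q i" and s: "s = increment_types x d i k"
    by (auto simp: queues_of_walks_def split: if_splits)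
  show "sorted s" "set s \<subseteq> {1..d}"
    using s sorted_increment_types set_increment_types by auto
  have "x i i (Suc k) = - int (Suc k)" "x i i k = - int k"
    using barSr_D(7)[OF assms] i k by auto
  then have "count_list s i = 0"
    using count_increment_types[OF assms i i k] s by simp
  then show "i \<notin> set s"
    by (simp add: count_list_0_iff)
qed (auto simp: queues_of_walks_def)

lemma Psi_queues_of_walks:
  assumes qx: "(q, x) \<in> barSr d r"
  shows "Psi_queues d (queues_of_walks q x d) = (q, x)"
proof -
  note walk = barSr_D[OF qx]
  have "fst (Psi_queues d (queues_of_walks q x d)) = q"
    using walk(1) by (auto simp: Psi_queues_def queues_of_walks_def)
  moreover have "snd (Psi_queues d (queues_of_walks q x d)) i j n = x i j n" for i j n
  proof (cases "i \<in> {1..d} \<and> j \<in> {1..d} \<and> n \<le> q i")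
    case True
    then have "snd (Psi_queues d (queues_of_walks q x d)) i j n = (\<Sum>k<n. x i j (Suc k) - x i j k)"
      using count_increment_types[OF qx] by (auto simp: Psi_queues_def queues_of_walks_def intro!: sum.cong)
    also have "\<dots> = x i j n"
      using walk(3) True by (simp add: sum_lessThan_telescope)
    finally show ?thesis .
  next
    case False
    then show ?thesis
      using walk(2) by (auto simp: Psi_queues_def queues_of_walks_def)
  qed
  ultimately show ?thesis
    by (simp add: prod_eq_iff fun_eq_iff)
qed

lemma Phi_barFr_subset: "Phi d ` barFr d r \<subseteq> barSr d r \<times> Cdr d r"
proof (rule image_subsetI)
  fix ts assume "ts \<in> barFr d r"
  note forest = barFr_D[OF this]
  let ?Y = "type_queues (vertices ts)"
  have "is_smallest_solution d r (fst (Psi_queues d ?Y)) (snd (Psi_queues d ?Y)) (fst (Psi_queues d ?Y))"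
    using type_queues_smallest_solution[OF forest(1-3)]
    by (subst is_smallest_solution_cong) (simp_all add: fst_Psi_queues)
  then show "Phi d ts \<in> barSr d r \<times> Cdr d r"
    using Psi_queues_in_barSr[OF proper_type_queues[OF forest(1,2)] forest(4)] forest(3)
      Psi_properly_coloured[OF forest(2)]
    by (simp add: Phi_def root_types_def)
qed

lemma Phi_inj_on_barFr: "inj_on (Phi d) (barFr d r)"
proof (rule inj_onI)
  fix ts1 ts2 assume ts1: "ts1 \<in> barFr d r" and ts2: "ts2 \<in> barFr d r" and eq: "Phi d ts1 = Phi d ts2"
  note forest1 = barFr_D[OF ts1] and forest2 = barFr_D[OF ts2]
  have "Psi_queues d (type_queues (vertices ts1)) = Psi_queues d (type_queues (vertices ts2))"
    using eq Psi_properly_coloured[OF forest1(2)] Psi_properly_coloured[OF forest2(2)]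
    by (simp add: Phi_def)
  then have "type_queues (vertices ts1) = type_queues (vertices ts2)"
    using Psi_queues_inj proper_type_queues forest1 forest2 by blast
  moreover have "map label ts1 = map label ts2"
    using eq by (simp add: Phi_def root_types_def)
  ultimately show "ts1 = ts2"
    using decode_type_queues[OF forest1(1)] decode_type_queues[OF forest2(1)] by simp
qed

lemma barSr_Cdr_subset_Phi_image: "barSr d r \<times> Cdr d r \<subseteq> Phi d ` barFr d r"
proof (clarify)
  fix q x c assume qx: "(q, x) \<in> barSr d r" and c: "c \<in> Cdr d r"
  let ?Y = "queues_of_walks q x d"
  have proper: "proper_queues d ?Y" and Psi: "Psi_queues d ?Y = (q, x)"
    using proper_queues_of_walks[OF qx] Psi_queues_of_walks[OF qx] .
  have lengths: "\<forall>i\<in>{1..d}. length (?Y i) = q i"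
    by (simp add: queues_of_walks_def)
  have "is_smallest_solution d r q x (\<lambda>i. length (?Y i))"
    using barSr_D(6)[OF qx] lengths by (subst is_smallest_solution_cong) simp_all
  then obtain ts where labels: "map label ts = c" and queues: "type_queues (vertices ts) = ?Y"
    using smallest_solution_queues_realised[OF proper c] Psi by auto
  have "\<forall>i\<in>{1..d}. ?Y i \<noteq> []"
    using lengths barSr_D(5)[OF qx] by fastforce
  then have forest: "ts \<in> barFr d r"
    using barFr_I[of d ts r] proper queues labels c by simp
  have "Phi d ts = ((q, x), c)"
    using Psi_properly_coloured[OF barFr_D(2)[OF forest]] queues Psi labels
    by (simp add: Phi_def root_types_def)
  then show "((q, x), c) \<in> Phi d ` barFr d r"
    by (rule image_eqI[OF sym forest])
qed

theorem lemma2p5: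
  fixes d :: nat and r :: "nat \<Rightarrow> nat"
  assumes "d \<ge> 2"
    and "\<exists>i\<in>{1..d}. r i > 0"
  shows "bij_betw (Phi d) (barFr d r) (barSr d r \<times> Cdr d r)"
  unfolding bij_betw_def
  using Phi_inj_on_barFr Phi_barFr_subset barSr_Cdr_subset_Phi_image by blast

end
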